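(* Let $G$ be a finite group. Then the commuting graph $\Gamma_C(G)$ is minimally edge connected if and only if $G$ is abelian.
   Context: The commuting graph $\Gamma_C(G)$ of a group $G$ is the simple undirected graph with vertex set $G$ in which two distinct elements $x,y$ are adjacent if and only if $xy=yx$. For a connected graph $\Gamma$, an edge cut-set is a set $S$ of edges such that $\Gamma-S$ is disconnected or has just one vertex, and the edge connectivity $\kappa'(\Gamma)$ is the smallest size of an edge cut-set. $\Gamma$ is minimally edge connected if $\kappa'(\Gamma-\epsilon)=\kappa'(\Gamma)-1$ for every edge $\epsilon$ of $\Gamma$. *)

theory Defs
  imports "HOL-Algebra.Group"
begin

text \<open>Finite simple undirected graphs are represented by a vertex set V and an
edge set E of two-element subsets of V.\<close>

definition graph_adj :: "'a set set \<Rightarrow> 'a \<Rightarrow> 'a \<Rightarrow> bool" where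
  "graph_adj E x y \<longleftrightarrow> x \<noteq> y \<and> {x, y} \<in> E"

definition graph_connected :: "'a set \<Rightarrow> 'a set set \<Rightarrow> bool" where
  "graph_connected V E \<longleftrightarrow> V \<noteq> {} \<and>
     (\<forall>u\<in>V. \<forall>v\<in>V. (graph_adj E)\<^sup>*\<^sup>* u v)"

definition edge_cut_set :: "'a set \<Rightarrow> 'a set set \<Rightarrow> 'a set set \<Rightarrow> bool" where
  "edge_cut_set V E S \<longleftrightarrow> S \<subseteq> E \<and>
     (\<not> graph_connected V (E - S) \<or> card V = 1)"

definition edge_connectivity :: "'a set \<Rightarrow> 'a set set \<Rightarrow> nat" where
  "edge_connectivity V E = (LEAST k. \<exists>S. edge_cut_set V E S \<and> finite S \<and> card S = k)"

definition minimally_edge_connected :: "'a set \<Rightarrow> 'a set set \<Rightarrow> bool" where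
  "minimally_edge_connected V E \<longleftrightarrow>
     (\<forall>e\<in>E. int (edge_connectivity V (E - {e})) = int (edge_connectivity V E) - 1)"

definition commuting_graph_edges :: "('a, 'b) monoid_scheme \<Rightarrow> 'a set set" where
  "commuting_graph_edges G =
     {{x, y} | x y. x \<in> carrier G \<and> y \<in> carrier G \<and> x \<noteq> y \<and>
                    x \<otimes>\<^bsub>G\<^esub> y = y \<otimes>\<^bsub>G\<^esub> x}"

end

theory Submission
  imports Defs "HOL-Algebra.Group_Action"
begin

text \<open>In the commuting graph the identity is adjacent to every other vertex. In a graph with
such a hub, and still after deleting one edge, every edge cut has at least as many edges as the
minimum degree, so the edge connectivity equals the minimum degree. Minimal edge connectivity
therefore means that deleting any edge lowers the minimum degree. The degree of \<open>x\<close> is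
\<open>|C(x)| - 1\<close>. For abelian \<open>G\<close> the graph is complete, and deleting any edge lowers the
minimum degree by one. Otherwise the class equation \<open>\<Sum>\<^sub>x |C(x)| = k |G|\<close> shows that the
centralizers of the non-identity elements cannot all have the same order, so some \<open>y \<noteq> 1\<close> has
degree above the minimum and deleting the edge \<open>{1, y}\<close> leaves the minimum degree unchanged.\<close>

definition degree :: "'a set \<Rightarrow> 'a set set \<Rightarrow> 'a \<Rightarrow> nat" where
  "degree V E v = card {u \<in> V. u \<noteq> v \<and> {u, v} \<in> E}"

definition min_degree :: "'a set \<Rightarrow> 'a set set \<Rightarrow> nat" where
  "min_degree V E = Min (degree V E ` V)"

definition cut_edges :: "'a set set \<Rightarrow> 'a set \<Rightarrow> 'a set \<Rightarrow> 'a set set" where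
  "cut_edges E A B = {{a, b} | a b. a \<in> A \<and> b \<in> B \<and> {a, b} \<in> E}"

lemma min_degree_le_degree:
  "finite V \<Longrightarrow> v \<in> V \<Longrightarrow> min_degree V E \<le> degree V E v"
  unfolding min_degree_def by simp

lemma min_degree_eqI:
  assumes "finite V" "v \<in> V" "degree V E v = d" "\<And>u. u \<in> V \<Longrightarrow> d \<le> degree V E u"
  shows "min_degree V E = d"
  unfolding min_degree_def using assms by (intro antisym Min_le Min.boundedI) auto

lemma min_degree_attained:
  assumes "finite V" "V \<noteq> {}"
  obtains v where "v \<in> V" "degree V E v = min_degree V E"
  using Min_in[of "degree V E ` V"] assms unfolding min_degree_def
  by (metis finite_imageI image_iff image_is_empty)

lemma degree_Diff_edge_nonincident:
  "v \<notin> e \<Longrightarrow> degree V (E - {e}) v = degree V E v"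
  unfolding degree_def by (metis (no_types, lifting) Diff_iff insertCI singletonD)

lemma degree_Diff_edge_incident:
  assumes "finite V" "{p, q} \<in> E" "p \<noteq> q" "q \<in> V"
  shows "degree V (E - {{p, q}}) p = degree V E p - 1"
proof -
  have "{u \<in> V. u \<noteq> p \<and> {u, p} \<in> E - {{p, q}}} = {u \<in> V. u \<noteq> p \<and> {u, p} \<in> E} - {q}"
    using assms(3) by (auto simp: doubleton_eq_iff)
  moreover have "q \<in> {u \<in> V. u \<noteq> p \<and> {u, p} \<in> E}"
    using assms by (auto simp: insert_commute)
  ultimately show ?thesis
    unfolding degree_def using assms(1) by simp
qed

lemma reachable_from_isolated:
  assumes "(graph_adj E)\<^sup>*\<^sup>* v w" "\<And>x. \<not> graph_adj E v x"
  shows "w = v"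
  using assms(1) by (rule converse_rtranclpE) (use assms(2) in auto)

lemma edge_cut_set_incident_edges:
  assumes "2 \<le> card V" "\<forall>e\<in>E. e \<subseteq> V" "v \<in> V"
  shows "edge_cut_set V E ((\<lambda>u. {u, v}) ` {u \<in> V. u \<noteq> v \<and> {u, v} \<in> E})"
    (is "edge_cut_set V E ?S")
proof -
  obtain w where w: "w \<in> V" "w \<noteq> v"
  proof -
    have "finite V" using assms(1) by (metis card.infinite not_numeral_le_zero)
    then have "card (V - {v}) \<noteq> 0" using assms(1,3) by simp
    then have "V - {v} \<noteq> {}" by (metis card.empty)
    then show ?thesis using that by blast
  qed
  have isolated: "\<not> graph_adj (E - ?S) v x" for x
  proof
    assume "graph_adj (E - ?S) v x"
    then have "x \<noteq> v" "{v, x} \<in> E" "{v, x} \<notin> ?S"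
      unfolding graph_adj_def by auto
    moreover have "x \<in> V" using assms(2) \<open>{v, x} \<in> E\<close> by auto
    ultimately have "{x, v} \<in> ?S" by (simp add: insert_commute)
    then show False using \<open>{v, x} \<notin> ?S\<close> by (simp add: insert_commute)
  qed
  have "\<not> (graph_adj (E - ?S))\<^sup>*\<^sup>* v w"
  proof
    assume "(graph_adj (E - ?S))\<^sup>*\<^sup>* v w"
    then have "w = v" using isolated by (rule reachable_from_isolated)
    with w(2) show False by simp
  qed
  then have "\<not> graph_connected V (E - ?S)"
    using assms(3) w(1) unfolding graph_connected_def by blast
  then show ?thesis unfolding edge_cut_set_def by blast
qed

lemma edge_connectivity_le_card:
  "edge_cut_set V E S \<Longrightarrow> finite S \<Longrightarrow> edge_connectivity V E \<le> card S"
  unfolding edge_connectivity_def by (rule Least_le) blast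

lemma edge_connectivity_le_degree:
  assumes "finite V" "2 \<le> card V" "\<forall>e\<in>E. e \<subseteq> V" "v \<in> V"
  shows "edge_connectivity V E \<le> degree V E v"
proof -
  let ?N = "{u \<in> V. u \<noteq> v \<and> {u, v} \<in> E}"
  have "edge_connectivity V E \<le> card ((\<lambda>u. {u, v}) ` ?N)"
    using edge_cut_set_incident_edges[OF assms(2-4)] assms(1)
    by (intro edge_connectivity_le_card) auto
  also have "\<dots> \<le> degree V E v"
    unfolding degree_def using assms(1) by (intro card_image_le) simp
  finally show ?thesis .
qed

lemma edge_cut_set_separates:
  assumes "edge_cut_set V E S" "2 \<le> card V"
  obtains A B where "A \<union> B = V" "A \<inter> B = {}" "A \<noteq> {}" "B \<noteq> {}" "cut_edges E A B \<subseteq> S"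
proof -
  have "\<not> graph_connected V (E - S)" and "V \<noteq> {}"
    using assms unfolding edge_cut_set_def by auto
  then obtain u w where u: "u \<in> V" and w: "w \<in> V" and "\<not> (graph_adj (E - S))\<^sup>*\<^sup>* u w"
    unfolding graph_connected_def by blast
  define A where "A = {x \<in> V. (graph_adj (E - S))\<^sup>*\<^sup>* u x}"
  have "cut_edges E A (V - A) \<subseteq> S"
  proof
    fix e assume "e \<in> cut_edges E A (V - A)"
    then obtain a b where "e = {a, b}" "a \<in> A" "b \<in> V - A" "{a, b} \<in> E"
      unfolding cut_edges_def by blast
    moreover have "\<not> graph_adj (E - S) a b"
    proof
      assume "graph_adj (E - S) a b"
      moreover have "(graph_adj (E - S))\<^sup>*\<^sup>* u a" using \<open>a \<in> A\<close> unfolding A_def by simp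
      ultimately have "(graph_adj (E - S))\<^sup>*\<^sup>* u b" by (rule rtranclp.rtrancl_into_rtrancl[rotated])
      with \<open>b \<in> V - A\<close> show False unfolding A_def by simp
    qed
    ultimately show "e \<in> S" unfolding graph_adj_def by blast
  qed
  moreover have "u \<in> A" "w \<in> V - A"
    using u w \<open>\<not> (graph_adj (E - S))\<^sup>*\<^sup>* u w\<close> unfolding A_def by auto
  moreover have "A \<subseteq> V" unfolding A_def by blast
  ultimately show ?thesis by (intro that[of A "V - A"]) blast+
qed

lemma edge_connectivity_geI:
  assumes "finite V" "2 \<le> card V" "\<forall>e\<in>E. e \<subseteq> V"
    and "\<And>A B. A \<union> B = V \<Longrightarrow> A \<inter> B = {} \<Longrightarrow> A \<noteq> {} \<Longrightarrow> B \<noteq> {} \<Longrightarrow>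
           d \<le> card (cut_edges E A B)"
  shows "d \<le> edge_connectivity V E"
proof -
  have "V \<noteq> {}" using assms(2) by auto
  then obtain v where "v \<in> V" by blast
  let ?P = "\<lambda>k. \<exists>S. edge_cut_set V E S \<and> finite S \<and> card S = k"
  have "?P (card ((\<lambda>u. {u, v}) ` {u \<in> V. u \<noteq> v \<and> {u, v} \<in> E}))"
    using edge_cut_set_incident_edges[OF assms(2,3) \<open>v \<in> V\<close>] assms(1) by auto
  then have "?P (Least ?P)" by (rule LeastI)
  then obtain S where S: "edge_cut_set V E S" "finite S" "card S = edge_connectivity V E"
    unfolding edge_connectivity_def by blast
  obtain A B where "A \<union> B = V" "A \<inter> B = {}" "A \<noteq> {}" "B \<noteq> {}" "cut_edges E A B \<subseteq> S"
    by (rule edge_cut_set_separates[OF S(1) assms(2)])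
  then have "d \<le> card (cut_edges E A B)" using assms(4) by blast
  also have "\<dots> \<le> card S" using S(2) \<open>cut_edges E A B \<subseteq> S\<close> by (rule card_mono)
  finally show ?thesis using S(3) by simp
qed

lemma cut_edges_commute: "cut_edges E A B = cut_edges E B A"
proof -
  have "cut_edges E A B \<subseteq> cut_edges E B A" for A B
    unfolding cut_edges_def by (auto, metis insert_commute)
  then show ?thesis by blast
qed

lemma sum_neighbours_le_card_cut_edges:
  assumes "finite A" "finite B" "A \<inter> B = {}"
  shows "(\<Sum>b\<in>B. card {a \<in> A. {a, b} \<in> E}) \<le> card (cut_edges E A B)"
proof -
  let ?N = "\<lambda>b. {a \<in> A. {a, b} \<in> E}"
  have "inj_on (\<lambda>(b, a). {a, b}) (Sigma B ?N)"
    using assms(3) by (auto intro!: inj_onI simp: doubleton_eq_iff)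
  moreover have "(\<lambda>(b, a). {a, b}) ` Sigma B ?N \<subseteq> cut_edges E A B"
    unfolding cut_edges_def by auto
  moreover have "finite (cut_edges E A B)"
  proof (rule finite_subset)
    show "cut_edges E A B \<subseteq> (\<lambda>(a, b). {a, b}) ` (A \<times> B)"
      unfolding cut_edges_def by auto
  qed (use assms in simp)
  ultimately have "card (Sigma B ?N) \<le> card (cut_edges E A B)"
    by (rule card_inj_on_le)
  then show ?thesis using assms(1,2) by (simp add: card_SigmaI)
qed

lemma degree_le_neighbours_across:
  assumes "finite V" "A \<union> B = V" "b \<in> B"
  shows "degree V E b \<le> card {a \<in> A. {a, b} \<in> E} + (card B - 1)"
proof -
  have "degree V E b \<le> card ({a \<in> A. {a, b} \<in> E} \<union> (B - {b}))"
    unfolding degree_def using assms by (intro card_mono) auto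
  also have "\<dots> \<le> card {a \<in> A. {a, b} \<in> E} + card (B - {b})"
    by (rule card_Un_le)
  finally show ?thesis using assms by simp
qed

lemma card_cut_edges_lower_bound:
  assumes "finite V" "A \<union> B = V" "A \<inter> B = {}" "B \<noteq> {}"
    and across: "\<And>b. b \<in> B \<Longrightarrow> b \<noteq> y \<Longrightarrow> \<exists>a\<in>A. {a, b} \<in> E"
    and degree: "\<And>b. b \<in> B \<Longrightarrow> d \<le> degree V E b"
  shows "d \<le> card (cut_edges E A B)"
proof -
  let ?n = "\<lambda>b. card {a \<in> A. {a, b} \<in> E}" and ?k = "card B"
  have fin: "finite A" "finite B" using assms(1,2) by auto
  have "?k \<ge> 1" using fin(2) assms(4) by (simp add: Suc_le_eq card_gt_0_iff)
  have "d \<le> (\<Sum>b\<in>B. ?n b)"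
  proof (cases "?k \<le> d")
    case True
    \<comment> \<open>each of the \<open>k\<close> vertices of \<open>B\<close> sends at least \<open>d - (k - 1)\<close> edges across\<close>
    have "?k * d = (\<Sum>b\<in>B. d)" by simp
    also have "\<dots> \<le> (\<Sum>b\<in>B. ?n b + (?k - 1))"
      using degree degree_le_neighbours_across[OF assms(1,2), where E = E]
      by (intro sum_mono) (meson le_trans)
    also have "\<dots> = (\<Sum>b\<in>B. ?n b) + ?k * (?k - 1)"
      by (simp add: sum.distrib)
    finally have "?k * d \<le> (\<Sum>b\<in>B. ?n b) + ?k * (?k - 1)" .
    moreover have "?k * (?k - 1) \<le> d * (?k - 1)" using True by simp
    moreover have "?k * d = d * (?k - 1) + d" using \<open>?k \<ge> 1\<close> by (cases ?k) auto
    ultimately show ?thesis by linarith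
  next
    case False
    \<comment> \<open>every vertex of \<open>B\<close> other than \<open>y\<close> sends at least one edge across\<close>
    have "?k - 1 \<le> card (B - {y})" using fin(2) by (cases "y \<in> B") simp_all
    also have "\<dots> = (\<Sum>b\<in>B - {y}. 1)" by simp
    also have "\<dots> \<le> (\<Sum>b\<in>B - {y}. ?n b)"
    proof (rule sum_mono)
      fix b assume "b \<in> B - {y}"
      then have "{a \<in> A. {a, b} \<in> E} \<noteq> {}" using across by auto
      then show "1 \<le> ?n b" using fin(1) by (simp add: Suc_le_eq card_gt_0_iff)
    qed
    also have "\<dots> \<le> (\<Sum>b\<in>B. ?n b)" using fin(2) by (intro sum_mono2) auto
    finally show ?thesis using False by linarith
  qed
  also have "\<dots> \<le> card (cut_edges E A B)"
    using fin assms(3) by (rule sum_neighbours_le_card_cut_edges)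
  finally show ?thesis .
qed

lemma edge_connectivity_eq_min_degree:
  assumes "finite V" "2 \<le> card V" "\<forall>e\<in>E. e \<subseteq> V" "h \<in> V"
    and hub: "\<And>v. v \<in> V \<Longrightarrow> v \<noteq> h \<Longrightarrow> v \<noteq> y \<Longrightarrow> {h, v} \<in> E"
  shows "edge_connectivity V E = min_degree V E"
proof (rule antisym)
  have "V \<noteq> {}" using assms(2) by auto
  then obtain v where "v \<in> V" "degree V E v = min_degree V E"
    by (rule min_degree_attained[OF assms(1)])
  then show "edge_connectivity V E \<le> min_degree V E"
    using edge_connectivity_le_degree[OF assms(1-3)] by metis
next
  have hub_side: "min_degree V E \<le> card (cut_edges E A B)"
    if "A \<union> B = V" "A \<inter> B = {}" "B \<noteq> {}" "h \<in> A" for A B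
  proof (rule card_cut_edges_lower_bound[OF assms(1) that(1-3)])
    fix b assume "b \<in> B" "b \<noteq> y"
    moreover have "b \<in> V" "b \<noteq> h" using \<open>b \<in> B\<close> that by auto
    ultimately show "\<exists>a\<in>A. {a, b} \<in> E" using hub that(4) by blast
  next
    fix b assume "b \<in> B"
    then show "min_degree V E \<le> degree V E b"
      using assms(1) that(1) by (intro min_degree_le_degree) auto
  qed
  show "min_degree V E \<le> edge_connectivity V E"
  proof (rule edge_connectivity_geI[OF assms(1-3)])
    fix A B assume "A \<union> B = V" "A \<inter> B = {}" "A \<noteq> {}" "B \<noteq> {}"
    show "min_degree V E \<le> card (cut_edges E A B)"
    proof (cases "h \<in> A")
      case True
      then show ?thesis using hub_side \<open>A \<union> B = V\<close> \<open>A \<inter> B = {}\<close> \<open>B \<noteq> {}\<close> by blast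
    next
      case False
      then have "h \<in> B" using assms(4) \<open>A \<union> B = V\<close> by blast
      then have "min_degree V E \<le> card (cut_edges E B A)"
        using hub_side \<open>A \<union> B = V\<close> \<open>A \<inter> B = {}\<close> \<open>A \<noteq> {}\<close>
        by (simp add: Int_commute Un_commute)
      then show ?thesis by (simp add: cut_edges_commute)
    qed
  qed
qed

lemma minimally_edge_connected_iff_min_degree:
  assumes "finite V" "2 \<le> card V" "\<forall>e\<in>E. e \<subseteq> V" "h \<in> V"
    and hub: "\<And>v. v \<in> V \<Longrightarrow> v \<noteq> h \<Longrightarrow> {h, v} \<in> E"
  shows "minimally_edge_connected V E \<longleftrightarrow>
           (\<forall>e\<in>E. int (min_degree V (E - {e})) = int (min_degree V E) - 1)"
proof -
  have "edge_connectivity V (E - {e}) = min_degree V (E - {e})" for e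
  proof -
    \<comment> \<open>after deleting \<open>e\<close>, \<open>h\<close> is still adjacent to all vertices but at most one\<close>
    obtain y where y: "\<And>v. v \<noteq> h \<Longrightarrow> {h, v} = e \<Longrightarrow> v = y"
    proof (cases "\<exists>u. e = {h, u}")
      case True
      then obtain u where "e = {h, u}" by blast
      then show ?thesis by (intro that[of u]) (auto simp: doubleton_eq_iff)
    qed blast
    show ?thesis
    proof (rule edge_connectivity_eq_min_degree[OF assms(1,2) _ assms(4)])
      show "\<forall>e'\<in>E - {e}. e' \<subseteq> V" using assms(3) by blast
      fix v assume "v \<in> V" "v \<noteq> h" "v \<noteq> y"
      then show "{h, v} \<in> E - {e}" using hub y by blast
    qed
  qed
  moreover have "edge_connectivity V E = min_degree V E"
    using hub by (rule edge_connectivity_eq_min_degree[OF assms(1-4), where y = h])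
  ultimately show ?thesis unfolding minimally_edge_connected_def by simp
qed

lemma degree_Diff_edge:
  assumes "finite V" "p \<in> V" "q \<in> V" "p \<noteq> q" "{p, q} \<in> E"
  shows "degree V (E - {{p, q}}) v = (if v \<in> {p, q} then degree V E v - 1 else degree V E v)"
proof (cases "v \<in> {p, q}")
  case True
  then consider "v = p" | "v = q" by blast
  then show ?thesis
  proof cases
    case 1
    then show ?thesis using degree_Diff_edge_incident[OF assms(1,5,4,3)] by simp
  next
    case 2
    have "{q, p} \<in> E" using assms(5) by (simp add: insert_commute)
    then show ?thesis
      using degree_Diff_edge_incident[of V q p E] assms 2 by (simp add: insert_commute)
  qed
qed (simp add: degree_Diff_edge_nonincident)

lemma min_degree_Diff_edge_regular:
  assumes "finite V" "p \<in> V" "q \<in> V" "p \<noteq> q" "{p, q} \<in> E"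
    and "\<And>v. v \<in> V \<Longrightarrow> degree V E v = d"
  shows "min_degree V (E - {{p, q}}) = d - 1"
  using assms(6)
  by (intro min_degree_eqI[OF assms(1,2)]) (auto simp: degree_Diff_edge[OF assms(1-5)] assms(2))

lemma min_degree_Diff_edge_high_degree:
  assumes "finite V" "p \<in> V" "q \<in> V" "p \<noteq> q" "{p, q} \<in> E"
    and "min_degree V E < degree V E p" "min_degree V E < degree V E q"
  shows "min_degree V (E - {{p, q}}) = min_degree V E"
proof -
  obtain v where v: "v \<in> V" "degree V E v = min_degree V E"
    using min_degree_attained[OF assms(1)] assms(2) by blast
  then have "v \<notin> {p, q}" using assms(6,7) by auto
  show ?thesis
  proof (rule min_degree_eqI[OF assms(1) v(1)])
    show "degree V (E - {{p, q}}) v = min_degree V E"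
      using degree_Diff_edge[OF assms(1-5), of v] \<open>v \<notin> {p, q}\<close> v(2) by simp
    fix u assume "u \<in> V"
    then show "min_degree V E \<le> degree V (E - {{p, q}}) u"
      using degree_Diff_edge[OF assms(1-5), of u] min_degree_le_degree[OF assms(1), of u E]
        assms(6,7) by (auto split: if_splits)
  qed
qed

definition centralizer :: "('a, 'b) monoid_scheme \<Rightarrow> 'a \<Rightarrow> 'a set" where
  "centralizer G x = {g \<in> carrier G. g \<otimes>\<^bsub>G\<^esub> x = x \<otimes>\<^bsub>G\<^esub> g}"

context group
begin

lemma commuting_graph_edge_iff:
  "{u, v} \<in> commuting_graph_edges G \<longleftrightarrow>
     u \<in> carrier G \<and> v \<in> carrier G \<and> u \<noteq> v \<and> u \<otimes> v = v \<otimes> u"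
  unfolding commuting_graph_edges_def by (auto simp: doubleton_eq_iff)

lemma commuting_graph_edges_subset: "\<forall>e\<in>commuting_graph_edges G. e \<subseteq> carrier G"
  unfolding commuting_graph_edges_def by auto

lemma commuting_graph_edge_one:
  "v \<in> carrier G \<Longrightarrow> v \<noteq> \<one> \<Longrightarrow> {\<one>, v} \<in> commuting_graph_edges G"
  by (simp add: commuting_graph_edge_iff)

lemma degree_commuting_graph:
  assumes "finite (carrier G)" "x \<in> carrier G"
  shows "degree (carrier G) (commuting_graph_edges G) x = card (centralizer G x) - 1"
proof -
  have "{u \<in> carrier G. u \<noteq> x \<and> {u, x} \<in> commuting_graph_edges G} = centralizer G x - {x}"
    unfolding centralizer_def using assms(2) by (auto simp: commuting_graph_edge_iff)
  moreover have "x \<in> centralizer G x" unfolding centralizer_def using assms(2) by simp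
  moreover have "finite (centralizer G x)" unfolding centralizer_def using assms(1) by simp
  ultimately show ?thesis unfolding degree_def by simp
qed

lemma centralizer_one: "centralizer G \<one> = carrier G"
  unfolding centralizer_def by auto

lemma card_centralizer_pos:
  "finite (carrier G) \<Longrightarrow> x \<in> carrier G \<Longrightarrow> 0 < card (centralizer G x)"
  unfolding centralizer_def by (rule card_gt_0_iff[THEN iffD2]) auto

lemma sum_card_centralizer:
  assumes "finite (carrier G)"
  shows "(\<Sum>x\<in>carrier G. card (centralizer G x))
           = card (orbits G (carrier G) (\<lambda>g. \<lambda>h \<in> carrier G. g \<otimes> h \<otimes> inv g)) * order G"
proof -
  have "invariants (carrier G) (\<lambda>g. \<lambda>h \<in> carrier G. g \<otimes> h \<otimes> inv g) g = centralizer G g"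
    if "g \<in> carrier G" for g
    unfolding invariants_def centralizer_def using that
    by (auto simp: inv_solve_right) (metis inv_solve_right m_closed)+
  then show ?thesis
    using group_action.burnside[OF action_by_conjugation assms assms] by simp
qed

lemma comm_group_if_card_centralizer_const:
  assumes fin: "finite (carrier G)"
    and const: "\<And>x. x \<in> carrier G \<Longrightarrow> x \<noteq> \<one> \<Longrightarrow> card (centralizer G x) = c"
  shows "comm_group G"
proof (rule ccontr)
  assume "\<not> comm_group G"
  then obtain a b where ab: "a \<in> carrier G" "b \<in> carrier G" "a \<otimes> b \<noteq> b \<otimes> a"
    using group_comm_groupI by blast
  define n where "n = order G"
  define K where "K = card (orbits G (carrier G) (\<lambda>g. \<lambda>h \<in> carrier G. g \<otimes> h \<otimes> inv g))"
  have "a \<noteq> \<one>" using ab by auto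
  have "b \<notin> centralizer G a" using ab unfolding centralizer_def by auto
  then have "card (centralizer G a) < n"
    using ab(2) fin unfolding n_def order_def by (intro psubset_card_mono) (auto simp: centralizer_def)
  then have "c < n" using const[OF ab(1) \<open>a \<noteq> \<one>\<close>] by simp
  have "0 < c" using card_centralizer_pos[OF fin ab(1)] const[OF ab(1) \<open>a \<noteq> \<one>\<close>] by simp
  have "(\<Sum>x\<in>carrier G. card (centralizer G x)) = n + (n - 1) * c"
    using fin const unfolding n_def order_def
    by (simp add: sum.remove[OF fin one_closed] centralizer_one)
  then have "n + (n - 1) * c = K * n"
    using sum_card_centralizer[OF fin] unfolding K_def n_def by simp
  \<comment> \<open>the class equation forces \<open>n\<close> to divide \<open>c\<close>\<close>
  then have "int c = int n * (1 + int c - int K)"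
    using \<open>c < n\<close> by (simp add: algebra_simps of_nat_diff flip: of_nat_mult of_nat_add)
  then have "n dvd c" by (metis dvd_triv_left of_nat_dvd_iff)
  then show False using \<open>0 < c\<close> \<open>c < n\<close> by (simp add: nat_dvd_not_less)
qed

lemma not_minimally_edge_connected_commuting_graph:
  assumes fin: "finite (carrier G)" and "\<not> comm_group G"
  shows "\<not> minimally_edge_connected (carrier G) (commuting_graph_edges G)"
proof -
  let ?V = "carrier G" and ?E = "commuting_graph_edges G"
  define \<delta> where "\<delta> = min_degree ?V ?E"
  obtain a b where ab: "a \<in> ?V" "b \<in> ?V" "a \<otimes> b \<noteq> b \<otimes> a"
    using assms(2) group_comm_groupI by blast
  have "a \<noteq> b" using ab(3) by auto
  then have two: "2 \<le> card ?V" using ab(1,2) fin card_mono[of ?V "{a, b}"] by auto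
  have "b \<notin> centralizer G a" using ab unfolding centralizer_def by auto
  then have "card (centralizer G a) < card ?V"
    using ab(2) fin by (intro psubset_card_mono) (auto simp: centralizer_def)
  then have "\<delta> < degree ?V ?E \<one>"
    using min_degree_le_degree[OF fin ab(1), of ?E] card_centralizer_pos[OF fin ab(1)]
    by (simp add: \<delta>_def degree_commuting_graph[OF fin ab(1)]
        degree_commuting_graph[OF fin one_closed] centralizer_one)
  obtain y where y: "y \<in> ?V" "y \<noteq> \<one>" "card (centralizer G y) \<noteq> \<delta> + 1"
    using comm_group_if_card_centralizer_const[OF fin] assms(2) by blast
  then have "\<delta> < degree ?V ?E y"
    using min_degree_le_degree[OF fin y(1), of ?E] card_centralizer_pos[OF fin y(1)]
    by (simp add: \<delta>_def degree_commuting_graph[OF fin])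
  have e: "{\<one>, y} \<in> ?E" using y by (simp add: commuting_graph_edge_one)
  have "min_degree ?V (?E - {{\<one>, y}}) = \<delta>"
    using min_degree_Diff_edge_high_degree[OF fin one_closed y(1) y(2)[symmetric] e]
      \<open>\<delta> < degree ?V ?E \<one>\<close> \<open>\<delta> < degree ?V ?E y\<close> unfolding \<delta>_def by blast
  then show ?thesis
    using minimally_edge_connected_iff_min_degree[OF fin two commuting_graph_edges_subset one_closed]
      commuting_graph_edge_one e unfolding \<delta>_def by force
qed

end

lemma (in comm_group) minimally_edge_connected_commuting_graph:
  assumes fin: "finite (carrier G)"
  shows "minimally_edge_connected (carrier G) (commuting_graph_edges G)"
proof (cases "2 \<le> card (carrier G)")
  case False
  have "commuting_graph_edges G = {}"
  proof (rule ccontr)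
    assume "commuting_graph_edges G \<noteq> {}"
    then obtain p q where "p \<in> carrier G" "q \<in> carrier G" "p \<noteq> q"
      unfolding commuting_graph_edges_def by blast
    then show False using False fin card_mono[of "carrier G" "{p, q}"] by auto
  qed
  then show ?thesis unfolding minimally_edge_connected_def by simp
next
  case True
  let ?V = "carrier G" and ?E = "commuting_graph_edges G"
  have degree: "degree ?V ?E x = card ?V - 1" if "x \<in> ?V" for x
  proof -
    have "centralizer G x = ?V" using that m_comm unfolding centralizer_def by auto
    then show ?thesis using degree_commuting_graph[OF fin that] by simp
  qed
  have "min_degree ?V ?E = card ?V - 1"
    using degree by (intro min_degree_eqI[OF fin one_closed]) auto
  moreover have "min_degree ?V (?E - {e}) = card ?V - 2" if "e \<in> ?E" for e
  proof -
    obtain p q where "e = {p, q}" "p \<in> ?V" "q \<in> ?V" "p \<noteq> q"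
      using \<open>e \<in> ?E\<close> unfolding commuting_graph_edges_def by blast
    then show ?thesis
      using min_degree_Diff_edge_regular[OF fin _ _ _ _ degree] \<open>e \<in> ?E\<close> by simp
  qed
  ultimately show ?thesis
    using minimally_edge_connected_iff_min_degree[OF fin True commuting_graph_edges_subset one_closed]
      commuting_graph_edge_one True by simp
qed

theorem mainTheorem7:
  fixes G :: "('a, 'b) monoid_scheme"
  assumes "group G" and "finite (carrier G)"
  shows "minimally_edge_connected (carrier G) (commuting_graph_edges G) \<longleftrightarrow> comm_group G"
  using group.not_minimally_edge_connected_commuting_graph[OF assms]
    comm_group.minimally_edge_connected_commuting_graph[OF _ assms(2)] by blast

end
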